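(* Let $n\ge1$. Every $\mathbf A\in\mathsf{PMV}_n$ embeds into the Priestley power of its distributive skeleton. That is, there is an injective homomorphism $\mathbf A\hookrightarrow\mathfrak P\mathfrak S(\mathbf A)=\mathbf{P\L}_n[\mathfrak S(\mathbf A)]$; it is the unit of the adjunction $\mathfrak S\dashv\mathfrak P$.
   Context: For $n\ge 1$, the algebra $\mathbf{P\L}_n=\langle\{0,\tfrac1n,\dots,1\},\min,\max,\odot,\oplus,0,1\rangle$ has $x\odot y=\max\{0,x+y-1\}$ and $x\oplus y=\min\{1,x+y\}$. $\mathsf{PMV}_n$ is the variety it generates. - The distributive skeleton is $\mathfrak S(\mathbf A)=\langle\{a\in A:a\oplus a=a\},\wedge,\vee,0,1\rangle$, a bounded distributive lattice. - For a bounded distributive lattice $\mathbf L$, the Priestley power $\mathbf{P\L}_n[\mathbf L]$ is the algebra, under pointwise operations, of continuous order-preserving maps from the Priestley dual space $\mathsf{DL}(\mathbf L,\mathbf 2)$ to the discrete ordered set $\langle\{0,\tfrac1n,\dots,1\},\le\rangle$. The dual space carries the pointwise order and product topology. - $\mathfrak P(\mathbf L)=\mathbf{P\L}_n[\mathbf L]$ defines a functor $\mathsf{DL}\to\mathsf{PMV}_n$ that is right adjoint to $\mathfrak S$. *)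

theory Defs
  imports "HOL-Analysis.Analysis"
begin

record 'a pmv_alg =
  carrier :: "'a set"
  meet :: "'a \<Rightarrow> 'a \<Rightarrow> 'a"
  join :: "'a \<Rightarrow> 'a \<Rightarrow> 'a"
  odot :: "'a \<Rightarrow> 'a \<Rightarrow> 'a"
  oplus :: "'a \<Rightarrow> 'a \<Rightarrow> 'a"
  zero :: 'a
  one :: 'a

definition pmv_structure :: "'a pmv_alg \<Rightarrow> bool" where
  "pmv_structure A \<longleftrightarrow>
     zero A \<in> carrier A \<and> one A \<in> carrier A \<and>
     (\<forall>x\<in>carrier A. \<forall>y\<in>carrier A.
        meet A x y \<in> carrier A \<and> join A x y \<in> carrier A \<and>
        odot A x y \<in> carrier A \<and> oplus A x y \<in> carrier A)"

definition PL :: "nat \<Rightarrow> real pmv_alg" where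
  "PL n = \<lparr> carrier = {real k / real n | k. k \<le> n},
            meet = min, join = max,
            odot = (\<lambda>x y. max 0 (x + y - 1)),
            oplus = (\<lambda>x y. min 1 (x + y)),
            zero = 0, one = 1 \<rparr>"

datatype pterm = PVar nat | PMeet pterm pterm | PJoin pterm pterm
  | POdot pterm pterm | POplus pterm pterm | PZero | POne

fun peval :: "'a pmv_alg \<Rightarrow> (nat \<Rightarrow> 'a) \<Rightarrow> pterm \<Rightarrow> 'a" where
  "peval A v (PVar i) = v i"
| "peval A v (PMeet s t) = meet A (peval A v s) (peval A v t)"
| "peval A v (PJoin s t) = join A (peval A v s) (peval A v t)"
| "peval A v (POdot s t) = odot A (peval A v s) (peval A v t)"
| "peval A v (POplus s t) = oplus A (peval A v s) (peval A v t)"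
| "peval A v PZero = zero A"
| "peval A v POne = one A"

definition satisfies :: "'a pmv_alg \<Rightarrow> pterm \<Rightarrow> pterm \<Rightarrow> bool" where
  "satisfies A s t \<longleftrightarrow>
     (\<forall>v. (\<forall>i. v i \<in> carrier A) \<longrightarrow> peval A v s = peval A v t)"

text \<open>PMV_n = HSP(PL_n) = Mod(Id(PL_n)) (Birkhoff).\<close>
definition PMV :: "nat \<Rightarrow> 'a pmv_alg set" where
  "PMV n = {A. pmv_structure A \<and>
                (\<forall>s t. satisfies (PL n) s t \<longrightarrow> satisfies A s t)}"

definition pmv_hom :: "'a pmv_alg \<Rightarrow> 'b pmv_alg \<Rightarrow> ('a \<Rightarrow> 'b) \<Rightarrow> bool" where
  "pmv_hom A B h \<longleftrightarrow>
     (\<forall>x\<in>carrier A. h x \<in> carrier B) \<and>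
     h (zero A) = zero B \<and> h (one A) = one B \<and>
     (\<forall>x\<in>carrier A. \<forall>y\<in>carrier A.
        h (meet A x y) = meet B (h x) (h y) \<and>
        h (join A x y) = join B (h x) (h y) \<and>
        h (odot A x y) = odot B (h x) (h y) \<and>
        h (oplus A x y) = oplus B (h x) (h y))"

record 'a bdl =
  lcarrier :: "'a set"
  lmeet :: "'a \<Rightarrow> 'a \<Rightarrow> 'a"
  ljoin :: "'a \<Rightarrow> 'a \<Rightarrow> 'a"
  lbot :: 'a
  ltop :: 'a

definition skeleton :: "'a pmv_alg \<Rightarrow> 'a bdl" where
  "skeleton A = \<lparr> lcarrier = {a\<in>carrier A. oplus A a a = a},
                  lmeet = meet A, ljoin = join A, lbot = zero A, ltop = one A \<rparr>"

text \<open>Points of the dual space DL(L,2): bounded lattice homomorphisms L \<rightarrow> 2,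
  represented as functions in the product space 2^L (extensional on L).\<close>
definition dual_space :: "'a bdl \<Rightarrow> ('a \<Rightarrow> bool) set" where
  "dual_space L = {x \<in> extensional (lcarrier L).
      x (lbot L) = False \<and> x (ltop L) = True \<and>
      (\<forall>a\<in>lcarrier L. \<forall>b\<in>lcarrier L.
         x (lmeet L a b) = (x a \<and> x b) \<and> x (ljoin L a b) = (x a \<or> x b))}"

definition dual_topology :: "'a bdl \<Rightarrow> ('a \<Rightarrow> bool) topology" where
  "dual_topology L = subtopology (product_topology (\<lambda>_. discrete_topology UNIV) (lcarrier L))
                                 (dual_space L)"

definition dual_le :: "'a bdl \<Rightarrow> ('a \<Rightarrow> bool) \<Rightarrow> ('a \<Rightarrow> bool) \<Rightarrow> bool" where
  "dual_le L x y \<longleftrightarrow> (\<forall>a\<in>lcarrier L. x a \<longrightarrow> y a)"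

definition priestley_power :: "nat \<Rightarrow> 'a bdl \<Rightarrow> (('a \<Rightarrow> bool) \<Rightarrow> real) pmv_alg" where
  "priestley_power n L =
     (let X = dual_space L in
     \<lparr> carrier = {f \<in> extensional X.
          continuous_map (dual_topology L) (discrete_topology (carrier (PL n))) f \<and>
          (\<forall>x\<in>X. \<forall>y\<in>X. dual_le L x y \<longrightarrow> f x \<le> f y)},
       meet = (\<lambda>f g. \<lambda>x\<in>X. meet (PL n) (f x) (g x)),
       join = (\<lambda>f g. \<lambda>x\<in>X. join (PL n) (f x) (g x)),
       odot = (\<lambda>f g. \<lambda>x\<in>X. odot (PL n) (f x) (g x)),
       oplus = (\<lambda>f g. \<lambda>x\<in>X. oplus (PL n) (f x) (g x)),
       zero = (\<lambda>x\<in>X. zero (PL n)),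
       one = (\<lambda>x\<in>X. one (PL n)) \<rparr>)"

text \<open>The element of PL_n[S(A)] corresponding to an idempotent e under
  S(PL_n[L]) = L: the map x \<mapsto> x(e) (0 or 1).\<close>
definition idem_point :: "'a pmv_alg \<Rightarrow> 'a \<Rightarrow> ('a \<Rightarrow> bool) \<Rightarrow> real" where
  "idem_point A e = (\<lambda>x\<in>dual_space (skeleton A). if x e then 1 else 0)"

end

theory Submission
  imports Defs
begin

text \<open>Every identity of PL_n holds in A, and identities of PL_n can be decided by evaluating
  terms on the numerators 0, ..., n. For 0 \<le> m \<le> n there is a term t_m with t_m(u) = 1 if
  u \<ge> m/n and t_m(u) = 0 otherwise on PL_n; hence every t_m(a) is idempotent, i.e. lies in
  the skeleton. A point x of the dual space assigns to a \<in> A the level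
  max {m. x(t_m(a))}, and \<eta>(a)(x) is that level divided by n. Identities of PL_n relating
  the t_m to the operations make the level a homomorphism into {0, ..., n}. The prime filter
  theorem separates idempotents by points, and a is determined by its thresholds t_m(a), so
  \<eta> is injective. Finally, a homomorphism that agrees with \<eta> on the idempotents commutes
  with the t_m, which fixes its levels at every point.\<close>

section \<open>Identities of PL_n\<close>

text \<open>The numerator k stands for k/n in PL_n; truncated subtraction on nat is exactly the
  clipping at 0 in \<open>\<odot>\<close>.\<close>
fun grid_eval :: "nat \<Rightarrow> (nat \<Rightarrow> nat) \<Rightarrow> pterm \<Rightarrow> nat" where
  "grid_eval n w (PVar i) = w i"
| "grid_eval n w (PMeet s t) = min (grid_eval n w s) (grid_eval n w t)"
| "grid_eval n w (PJoin s t) = max (grid_eval n w s) (grid_eval n w t)"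
| "grid_eval n w (POdot s t) = grid_eval n w s + grid_eval n w t - n"
| "grid_eval n w (POplus s t) = min n (grid_eval n w s + grid_eval n w t)"
| "grid_eval n w PZero = 0"
| "grid_eval n w POne = n"

lemma oplus_grid:
  assumes "n \<ge> 1"
  shows "min 1 (real a / real n + real b / real n) = real (min n (a + b)) / real n"
proof (cases "a + b \<le> n")
  case True
  then have "real a / real n + real b / real n \<le> 1" using assms
    by (simp add: add_divide_distrib[symmetric] divide_le_eq)
  then show ?thesis using True by (simp add: add_divide_distrib)
next
  case False
  then have "real a / real n + real b / real n \<ge> 1" using assms
    by (simp add: add_divide_distrib[symmetric] le_divide_eq)
  then show ?thesis using False assms by simp
qed

lemma odot_grid:
  assumes "n \<ge> 1"
  shows "max 0 (real a / real n + real b / real n - 1) = real (a + b - n) / real n"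
proof (cases "a + b \<ge> n")
  case True
  have "real (a + b - n) / real n = real a / real n + real b / real n - 1"
    using True assms by (simp add: of_nat_diff field_simps)
  moreover have "real a / real n + real b / real n - 1 \<ge> 0" using True assms
    by (simp add: add_divide_distrib[symmetric] le_divide_eq)
  ultimately show ?thesis by simp
next
  case False
  then have "real a / real n + real b / real n \<le> 1" using assms
    by (simp add: add_divide_distrib[symmetric] divide_le_eq)
  then show ?thesis using False assms by simp
qed

lemma min_max_grid:
  shows "min (real a / real n) (real b / real n) = real (min a b) / real n"
    and "max (real a / real n) (real b / real n) = real (max a b) / real n"
  by (simp_all add: of_nat_min of_nat_max min_divide_distrib_right max_divide_distrib_right)

lemma peval_PL_grid_eval:
  assumes "n \<ge> 1" and "\<forall>i. w i \<le> n"
  shows "peval (PL n) (\<lambda>i. real (w i) / real n) t = real (grid_eval n w t) / real n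
         \<and> grid_eval n w t \<le> n"
proof (induction t)
  case (POplus s t)
  then show ?case using oplus_grid[OF assms(1)] by (simp add: PL_def)
next
  case (POdot s t)
  then show ?case using odot_grid[OF assms(1)] by (simp add: PL_def) linarith
qed (use assms in \<open>auto simp: PL_def min_max_grid\<close>)

lemma satisfies_PL_if_grid_eval_eq:
  assumes "n \<ge> 1" and "\<And>w. \<forall>i. w i \<le> n \<Longrightarrow> grid_eval n w s = grid_eval n w t"
  shows "satisfies (PL n) s t"
  unfolding satisfies_def
proof (intro allI impI)
  fix v :: "nat \<Rightarrow> real"
  assume "\<forall>i. v i \<in> carrier (PL n)"
  then have "\<forall>i. \<exists>k. k \<le> n \<and> v i = real k / real n" by (auto simp: PL_def)
  then obtain w where w: "\<forall>i. w i \<le> n" and v: "v = (\<lambda>i. real (w i) / real n)" by metis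
  show "peval (PL n) v s = peval (PL n) v t"
    using peval_PL_grid_eval[OF assms(1) w] assms(2)[OF w] unfolding v by metis
qed

lemma PMV_identity:
  assumes "A \<in> PMV n" and "n \<ge> 1"
    and "\<And>w. \<forall>i. w i \<le> n \<Longrightarrow> grid_eval n w s = grid_eval n w t"
    and "\<And>i. v i \<in> carrier A"
  shows "peval A v s = peval A v t"
  using assms satisfies_PL_if_grid_eval_eq[OF assms(2,3)]
  unfolding PMV_def satisfies_def by blast

lemma peval_closed:
  assumes "pmv_structure A" and "\<And>i. v i \<in> carrier A"
  shows "peval A v t \<in> carrier A"
  using assms by (induction t) (auto simp: pmv_structure_def)

section \<open>Threshold terms\<close>

text \<open>On PL_n, \<open>x \<oplus> x\<close> and \<open>x \<odot> x\<close> double the distance of x from 0 and from 1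
  respectively; d such doublings, chosen by the binary digits of s, stretch the interval
  [s/2^d, (s+1)/2^d] onto [0, 1].\<close>
fun zoom_term :: "nat \<Rightarrow> nat \<Rightarrow> pterm \<Rightarrow> pterm" where
  "zoom_term 0 s u = u"
| "zoom_term (Suc d) s u =
     (if even s then POplus (zoom_term d (s div 2) u) (zoom_term d (s div 2) u)
      else POdot (zoom_term d (s div 2) u) (zoom_term d (s div 2) u))"

fun mult_term :: "nat \<Rightarrow> pterm \<Rightarrow> pterm" where
  "mult_term 0 u = PZero"
| "mult_term (Suc k) u = (if k = 0 then u else POplus u (mult_term k u))"

text \<open>The least s with (m - 1) 2^n \<le> n s; since n < 2^n, also n s < m 2^n, so the zoom
  window [s/2^n, (s+1)/2^n] lies between (m - 1)/n and m/n and has width below 1/n.\<close>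
definition zoom_index :: "nat \<Rightarrow> nat \<Rightarrow> nat" where
  "zoom_index n m = ((m - 1) * 2^n + n - 1) div n"

definition threshold_term :: "nat \<Rightarrow> nat \<Rightarrow> pterm \<Rightarrow> pterm" where
  "threshold_term n m u =
     (if m = 0 then POne else if n < m then PZero
      else mult_term n (zoom_term n (zoom_index n m) u))"

lemma clip_double:
  fixes u :: real
  shows "min 1 (max 0 (min 1 u) + max 0 (min 1 u)) = max 0 (min 1 (2 * u))"
    and "max 0 (max 0 (min 1 u) + max 0 (min 1 u) - 1) = max 0 (min 1 (2 * u - 1))"
  by (auto simp: min_def max_def)

lemma peval_PL_zoom_term:
  assumes "peval (PL n) v u = y" and "0 \<le> y" and "y \<le> 1" and "s < 2^d"
  shows "peval (PL n) v (zoom_term d s u) = max 0 (min 1 (2^d * y - real s))"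
  using assms(4)
proof (induction d arbitrary: s)
  case 0
  then show ?case using assms(1-3) by simp
next
  case (Suc d)
  define c where "c = peval (PL n) v (zoom_term d (s div 2) u)"
  define z where "z = 2^d * y - real (s div 2)"
  have IH: "c = max 0 (min 1 z)" unfolding c_def z_def using Suc by simp
  show ?case
  proof (cases "even s")
    case True
    then have "real s = 2 * real (s div 2)" by (metis even_two_times_div_two of_nat_mult of_nat_numeral)
    then have z: "2 * z = 2 ^ Suc d * y - real s" unfolding z_def by (simp add: algebra_simps)
    have "peval (PL n) v (zoom_term (Suc d) s u) = min 1 (c + c)"
      using True unfolding c_def by (simp add: PL_def)
    also have "\<dots> = max 0 (min 1 (2 * z))" unfolding IH by (rule clip_double(1))
    finally show ?thesis unfolding z .
  next
    case False
    then have "s = 2 * (s div 2) + 1" by presburger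
    from arg_cong[OF this, of real] have "real s = 2 * real (s div 2) + 1" by simp
    then have z: "2 * z - 1 = 2 ^ Suc d * y - real s" unfolding z_def by (simp add: algebra_simps)
    have "peval (PL n) v (zoom_term (Suc d) s u) = max 0 (c + c - 1)"
      using False unfolding c_def by (simp add: PL_def)
    also have "\<dots> = max 0 (min 1 (2 * z - 1))" unfolding IH by (rule clip_double(2))
    finally show ?thesis unfolding z .
  qed
qed

lemma peval_PL_mult_term:
  assumes "peval (PL n) v u = y" and "0 \<le> y" and "y \<le> 1"
  shows "peval (PL n) v (mult_term k u) = min 1 (real k * y)"
proof (induction k)
  case (Suc k)
  then show ?case using assms by (cases "k = 0") (auto simp: PL_def min_def algebra_simps)
qed (simp add: PL_def)

lemma zoom_index_bounds:
  assumes "1 \<le> m" and "m \<le> n"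
  shows "(m - 1) * 2^n \<le> n * zoom_index n m" and "n * zoom_index n m < m * 2^n"
proof -
  define N where "N = (m - 1) * 2^n + n - 1"
  have n0: "n > 0" using assms by simp
  have lower: "n * zoom_index n m \<le> N"
    unfolding zoom_index_def N_def[symmetric] by simp
  have upper: "N < n * zoom_index n m + n"
    unfolding zoom_index_def N_def[symmetric]
    using div_mult_mod_eq[of N n] mod_less_divisor[OF n0, of N]
    by (metis add_less_cancel_left mult.commute)
  show "(m - 1) * 2^n \<le> n * zoom_index n m" using upper unfolding N_def by linarith
  obtain k where m: "m = Suc k" using assms(1) by (cases m) auto
  show "n * zoom_index n m < m * 2^n"
    using lower less_exp[of n] unfolding N_def m by (simp only: diff_Suc_1 mult_Suc)
qed

lemma zoom_index_less:
  assumes "1 \<le> m" and "m \<le> n"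
  shows "zoom_index n m < 2^n"
proof -
  have "n * zoom_index n m < n * 2^n"
    using zoom_index_bounds(2)[OF assms] mult_le_mono1[OF assms(2), of "2^n"] by linarith
  then show ?thesis by simp
qed

lemma mult_zoom_threshold:
  assumes "1 \<le> m" and "m \<le> n" and "j \<le> n"
  defines "z \<equiv> 2^n * (real j / real n) - real (zoom_index n m)"
  shows "min 1 (real n * max 0 (min 1 z)) = (if m \<le> j then 1 else 0)"
proof -
  define s where "s = zoom_index n m"
  have lower: "(m - 1) * 2^n \<le> n * s" and upper: "n * s < m * 2^n"
    using zoom_index_bounds[OF assms(1,2)] unfolding s_def by auto
  have np: "real n > 0" using assms by simp
  have nz: "real n * z = 2^n * real j - real n * real s"
    unfolding z_def s_def using np by (simp add: field_simps)
  show ?thesis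
  proof (cases "m \<le> j")
    case True
    then have "m * 2^n \<le> j * 2^n" by simp
    then have "n * s + 1 \<le> j * 2^n" using upper by linarith
    then have "real (n * s + 1) \<le> real (j * 2^n)" by (simp only: of_nat_le_iff)
    then have nz1: "1 \<le> real n * z" using nz by (simp add: mult.commute)
    then have "0 < real n * z" by linarith
    then have "0 < z" using np by (simp add: zero_less_mult_iff)
    then have "1 \<le> real n * max 0 (min 1 z)" using nz1 assms(1,2) by (cases "z \<le> 1") auto
    then show ?thesis using True by simp
  next
    case False
    then have "j * 2^n \<le> (m - 1) * 2^n" by simp
    then have "j * 2^n \<le> n * s" using lower by linarith
    then have "real (j * 2^n) \<le> real (n * s)" by (simp only: of_nat_le_iff)
    then have "real n * z \<le> 0" using nz by (simp add: mult.commute)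
    then have "z \<le> 0" using np by (simp add: mult_le_0_iff)
    then show ?thesis using False by simp
  qed
qed

lemma peval_PL_threshold_term:
  assumes "n \<ge> 1" and "j \<le> n" and u: "peval (PL n) v u = real j / real n"
  shows "peval (PL n) v (threshold_term n m u) = (if m \<le> j then 1 else 0)"
proof -
  consider "m = 0" | "n < m" | "1 \<le> m" "m \<le> n" by linarith
  then show ?thesis
  proof cases
    case 1
    then show ?thesis by (simp add: threshold_term_def PL_def)
  next
    case 2
    then show ?thesis using assms(2) by (simp add: threshold_term_def PL_def)
  next
    case 3
    have y: "0 \<le> real j / real n" "real j / real n \<le> 1" using assms(1,2) by (auto simp: divide_le_eq)
    have "peval (PL n) v (zoom_term n (zoom_index n m) u)
        = max 0 (min 1 (2^n * (real j / real n) - real (zoom_index n m)))"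
      by (rule peval_PL_zoom_term[OF u y zoom_index_less[OF 3]])
    then show ?thesis
      using 3 peval_PL_mult_term[of n v "zoom_term n (zoom_index n m) u"] mult_zoom_threshold[OF 3 assms(2)]
      unfolding threshold_term_def by simp
  qed
qed

lemma grid_eval_threshold_term:
  assumes "n \<ge> 1" and "\<forall>i. w i \<le> n"
  shows "grid_eval n w (threshold_term n m u) = (if m \<le> grid_eval n w u then n else 0)"
proof -
  let ?v = "\<lambda>i. real (w i) / real n"
  have "real (grid_eval n w (threshold_term n m u)) / real n = peval (PL n) ?v (threshold_term n m u)"
    using peval_PL_grid_eval[OF assms] by simp
  also have "\<dots> = (if m \<le> grid_eval n w u then 1 else 0)"
    using peval_PL_grid_eval[OF assms, of u] by (intro peval_PL_threshold_term[OF assms(1)]) auto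
  finally show ?thesis using assms(1) by (auto split: if_splits)
qed

lemma grid_eval_mult_term:
  assumes "grid_eval n w u \<le> n"
  shows "grid_eval n w (mult_term k u) = min n (k * grid_eval n w u)"
  using assms by (induction k) auto

lemma peval_zoom_term_subst:
  "peval A v (zoom_term d s u) = peval A (\<lambda>_. peval A v u) (zoom_term d s (PVar 0))"
  by (induction d arbitrary: s) auto

lemma peval_mult_term_subst:
  "peval A v (mult_term k u) = peval A (\<lambda>_. peval A v u) (mult_term k (PVar 0))"
  by (induction k) auto

definition threshold :: "'a pmv_alg \<Rightarrow> nat \<Rightarrow> nat \<Rightarrow> 'a \<Rightarrow> 'a" where
  "threshold A n m a = peval A (\<lambda>_. a) (threshold_term n m (PVar 0))"

lemma peval_threshold_term: "peval A v (threshold_term n m u) = threshold A n m (peval A v u)"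
  unfolding threshold_def threshold_term_def
  by (simp add: peval_mult_term_subst[of A v] peval_zoom_term_subst[of A v]
      peval_mult_term_subst[of A "\<lambda>_. peval A v u"])

section \<open>Prime filters of bounded distributive lattices\<close>

locale bounded_distrib_lattice =
  fixes S :: "'a set"
    and meet :: "'a \<Rightarrow> 'a \<Rightarrow> 'a" (infixl "\<sqinter>" 70)
    and join :: "'a \<Rightarrow> 'a \<Rightarrow> 'a" (infixl "\<squnion>" 65)
    and bot_elem :: 'a and top_elem :: 'a
  assumes bot_closed: "bot_elem \<in> S"
    and top_closed: "top_elem \<in> S"
    and meet_closed: "\<lbrakk>a \<in> S; b \<in> S\<rbrakk> \<Longrightarrow> a \<sqinter> b \<in> S"
    and join_closed: "\<lbrakk>a \<in> S; b \<in> S\<rbrakk> \<Longrightarrow> a \<squnion> b \<in> S"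
    and meet_commute: "\<lbrakk>a \<in> S; b \<in> S\<rbrakk> \<Longrightarrow> a \<sqinter> b = b \<sqinter> a"
    and join_commute: "\<lbrakk>a \<in> S; b \<in> S\<rbrakk> \<Longrightarrow> a \<squnion> b = b \<squnion> a"
    and meet_assoc: "\<lbrakk>a \<in> S; b \<in> S; c \<in> S\<rbrakk> \<Longrightarrow> a \<sqinter> b \<sqinter> c = a \<sqinter> (b \<sqinter> c)"
    and join_assoc: "\<lbrakk>a \<in> S; b \<in> S; c \<in> S\<rbrakk> \<Longrightarrow> a \<squnion> b \<squnion> c = a \<squnion> (b \<squnion> c)"
    and meet_absorb: "\<lbrakk>a \<in> S; b \<in> S\<rbrakk> \<Longrightarrow> a \<sqinter> (a \<squnion> b) = a"
    and join_absorb: "\<lbrakk>a \<in> S; b \<in> S\<rbrakk> \<Longrightarrow> a \<squnion> a \<sqinter> b = a"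
    and meet_join_distrib: "\<lbrakk>a \<in> S; b \<in> S; c \<in> S\<rbrakk> \<Longrightarrow> a \<sqinter> (b \<squnion> c) = a \<sqinter> b \<squnion> a \<sqinter> c"
    and bot_meet: "a \<in> S \<Longrightarrow> bot_elem \<sqinter> a = bot_elem"
    and meet_top: "a \<in> S \<Longrightarrow> a \<sqinter> top_elem = a"
begin

definition lattice_le :: "'a \<Rightarrow> 'a \<Rightarrow> bool" (infix "\<sqsubseteq>" 50) where
  "a \<sqsubseteq> b \<longleftrightarrow> a \<sqinter> b = a"

abbreviation as_bdl :: "'a bdl" where
  "as_bdl \<equiv> \<lparr>lcarrier = S, lmeet = (\<sqinter>), ljoin = (\<squnion>), lbot = bot_elem, ltop = top_elem\<rparr>"

lemma meet_idem: "a \<in> S \<Longrightarrow> a \<sqinter> a = a"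
  using meet_absorb[of a "a \<sqinter> a"] join_absorb[of a a] meet_closed[of a a] by simp

lemma join_idem: "a \<in> S \<Longrightarrow> a \<squnion> a = a"
  using join_absorb[of a "a \<squnion> a"] meet_absorb[of a a] join_closed[of a a] by simp

lemma le_refl: "a \<in> S \<Longrightarrow> a \<sqsubseteq> a"
  unfolding lattice_le_def by (rule meet_idem)

lemma meet_le1: "\<lbrakk>a \<in> S; b \<in> S\<rbrakk> \<Longrightarrow> a \<sqinter> b \<sqsubseteq> a"
  unfolding lattice_le_def
  using meet_assoc[of a b a] meet_assoc[of a a b] meet_commute[of b a] meet_idem[of a] by simp

lemma meet_le2: "\<lbrakk>a \<in> S; b \<in> S\<rbrakk> \<Longrightarrow> a \<sqinter> b \<sqsubseteq> b"
  unfolding lattice_le_def using meet_assoc[of a b b] meet_idem[of b] by simp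

lemma join_ge1: "\<lbrakk>a \<in> S; b \<in> S\<rbrakk> \<Longrightarrow> a \<sqsubseteq> a \<squnion> b"
  unfolding lattice_le_def by (rule meet_absorb)

lemma join_ge2: "\<lbrakk>a \<in> S; b \<in> S\<rbrakk> \<Longrightarrow> b \<sqsubseteq> a \<squnion> b"
  unfolding lattice_le_def using meet_absorb[of b a] join_commute[of a b] by simp

lemma le_antisym: "\<lbrakk>a \<in> S; b \<in> S; a \<sqsubseteq> b; b \<sqsubseteq> a\<rbrakk> \<Longrightarrow> a = b"
  unfolding lattice_le_def using meet_commute[of a b] by simp

lemma le_trans: "\<lbrakk>a \<in> S; b \<in> S; c \<in> S; a \<sqsubseteq> b; b \<sqsubseteq> c\<rbrakk> \<Longrightarrow> a \<sqsubseteq> c"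
  unfolding lattice_le_def using meet_assoc[of a b c] by simp

lemma le_meet_iff: "\<lbrakk>a \<in> S; b \<in> S; c \<in> S\<rbrakk> \<Longrightarrow> c \<sqsubseteq> a \<sqinter> b \<longleftrightarrow> c \<sqsubseteq> a \<and> c \<sqsubseteq> b"
  using le_trans[OF _ meet_closed[of a b]] meet_le1[of a b] meet_le2[of a b] meet_assoc[of c a b]
  unfolding lattice_le_def by metis

lemma meet_le_meet: "\<lbrakk>a \<in> S; b \<in> S; c \<in> S; a \<sqsubseteq> b\<rbrakk> \<Longrightarrow> a \<sqinter> c \<sqsubseteq> b \<sqinter> c"
  using le_meet_iff[of b c "a \<sqinter> c"] le_trans[OF _ _ _ meet_le1[of a c]] meet_le2[of a c] meet_closed
  by blast

lemma join_le: "\<lbrakk>a \<in> S; b \<in> S; c \<in> S; a \<sqsubseteq> c; b \<sqsubseteq> c\<rbrakk> \<Longrightarrow> a \<squnion> b \<sqsubseteq> c"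
  unfolding lattice_le_def
  using meet_commute[of "a \<squnion> b" c] meet_join_distrib[of c a b] meet_commute[of c a]
    meet_commute[of c b] join_closed[of a b] by simp

lemma le_iff_join: "\<lbrakk>a \<in> S; b \<in> S\<rbrakk> \<Longrightarrow> a \<sqsubseteq> b \<longleftrightarrow> a \<squnion> b = b"
  unfolding lattice_le_def
  using join_absorb[of b a] join_commute[of a b] meet_commute[of a b] meet_absorb[of a b] by auto

lemma bot_le: "a \<in> S \<Longrightarrow> bot_elem \<sqsubseteq> a"
  unfolding lattice_le_def by (rule bot_meet)

lemma le_top: "a \<in> S \<Longrightarrow> a \<sqsubseteq> top_elem"
  unfolding lattice_le_def by (rule meet_top)

lemma join_bot: "a \<in> S \<Longrightarrow> a \<squnion> bot_elem = a"
  using le_iff_join[OF bot_closed, of a] bot_le join_commute[OF bot_closed] by simp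

lemma meet_eq_join_imp_eq:
  assumes "a \<in> S" "b \<in> S" "a \<sqinter> b = a \<squnion> b"
  shows "a = b"
proof -
  have "a \<sqsubseteq> a \<sqinter> b" "b \<sqsubseteq> a \<sqinter> b" using join_ge1 join_ge2 assms by simp_all
  then show ?thesis using le_meet_iff le_antisym assms by blast
qed

definition lattice_filter :: "'a set \<Rightarrow> bool" where
  "lattice_filter F \<longleftrightarrow>
     F \<subseteq> S \<and> (\<forall>a\<in>F. \<forall>b\<in>F. a \<sqinter> b \<in> F) \<and> (\<forall>a\<in>F. \<forall>b\<in>S. a \<sqsubseteq> b \<longrightarrow> b \<in> F)"

lemma principal_filter: "u \<in> S \<Longrightarrow> lattice_filter {b \<in> S. u \<sqsubseteq> b}"
  unfolding lattice_filter_def by (auto simp: le_meet_iff meet_closed intro: le_trans)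

lemma Union_chain_filter:
  assumes "subset.chain {F. lattice_filter F} C"
  shows "lattice_filter (\<Union>C)"
proof -
  have filt: "\<And>F. F \<in> C \<Longrightarrow> lattice_filter F"
    and total: "\<And>F G. F \<in> C \<Longrightarrow> G \<in> C \<Longrightarrow> F \<subseteq> G \<or> G \<subseteq> F"
    using assms by (auto simp: subset_chain_def)
  show ?thesis
    unfolding lattice_filter_def
  proof (intro conjI ballI impI)
    show "\<Union>C \<subseteq> S" using filt unfolding lattice_filter_def by blast
  next
    fix a b assume "a \<in> \<Union>C" "b \<in> \<Union>C"
    then obtain F G where "F \<in> C" "a \<in> F" "G \<in> C" "b \<in> G" by blast
    then obtain H where "H \<in> C" "a \<in> H" "b \<in> H" using total by blast
    then show "a \<sqinter> b \<in> \<Union>C" using filt by (auto simp: lattice_filter_def)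
  next
    fix a b assume "a \<in> \<Union>C" "b \<in> S" "a \<sqsubseteq> b"
    then show "b \<in> \<Union>C" using filt unfolding lattice_filter_def by blast
  qed
qed

lemma filter_adjoin:
  assumes F: "lattice_filter F" and a: "a \<in> S"
  shows "lattice_filter {c \<in> S. \<exists>f\<in>F. f \<sqinter> a \<sqsubseteq> c}"
  unfolding lattice_filter_def
proof (intro conjI ballI impI)
  have FS: "F \<subseteq> S" and Fmeet: "\<And>f g. f \<in> F \<Longrightarrow> g \<in> F \<Longrightarrow> f \<sqinter> g \<in> F"
    using F by (auto simp: lattice_filter_def)
  {
    fix c d assume "c \<in> {c \<in> S. \<exists>f\<in>F. f \<sqinter> a \<sqsubseteq> c}" "d \<in> {c \<in> S. \<exists>f\<in>F. f \<sqinter> a \<sqsubseteq> c}"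
    then obtain f g where c: "c \<in> S" "f \<in> F" "f \<sqinter> a \<sqsubseteq> c" and d: "d \<in> S" "g \<in> F" "g \<sqinter> a \<sqsubseteq> d"
      by blast
    have f: "f \<in> S" and g: "g \<in> S" using c d FS by auto
    have fg: "f \<sqinter> g \<in> S" and fga: "f \<sqinter> g \<sqinter> a \<in> S" and fa: "f \<sqinter> a \<in> S" and ga: "g \<sqinter> a \<in> S"
      using f g a by (simp_all add: meet_closed)
    have "f \<sqinter> g \<sqinter> a \<sqsubseteq> c"
      using le_trans[OF fga fa c(1) meet_le_meet[OF fg f a meet_le1[OF f g]] c(3)] .
    moreover have "f \<sqinter> g \<sqinter> a \<sqsubseteq> d"
      using le_trans[OF fga ga d(1) meet_le_meet[OF fg g a meet_le2[OF f g]] d(3)] .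
    ultimately have "f \<sqinter> g \<sqinter> a \<sqsubseteq> c \<sqinter> d" using le_meet_iff[OF c(1) d(1) fga] by blast
    then show "c \<sqinter> d \<in> {c \<in> S. \<exists>f\<in>F. f \<sqinter> a \<sqsubseteq> c}"
      using Fmeet[OF c(2) d(2)] meet_closed[OF c(1) d(1)] by blast
  next
    fix c d assume "c \<in> {c \<in> S. \<exists>f\<in>F. f \<sqinter> a \<sqsubseteq> c}" "d \<in> S" "c \<sqsubseteq> d"
    then obtain f where c: "c \<in> S" "f \<in> F" "f \<sqinter> a \<sqsubseteq> c" by blast
    then have "f \<in> S" using FS by blast
    then have "f \<sqinter> a \<sqsubseteq> d"
      using le_trans[OF meet_closed[OF _ a] c(1) \<open>d \<in> S\<close> c(3) \<open>c \<sqsubseteq> d\<close>] by blast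
    then show "d \<in> {c \<in> S. \<exists>f\<in>F. f \<sqinter> a \<sqsubseteq> c}" using \<open>f \<in> F\<close> \<open>d \<in> S\<close> by blast
  }
qed blast

lemma maximal_filter_prime:
  assumes M: "lattice_filter M" "u \<in> M" and v: "v \<in> S" "v \<notin> M"
    and maximal: "\<And>F. \<lbrakk>lattice_filter F; v \<notin> F; M \<subseteq> F\<rbrakk> \<Longrightarrow> F = M"
    and ab: "a \<in> S" "b \<in> S" "a \<squnion> b \<in> M"
  shows "a \<in> M \<or> b \<in> M"
proof -
  have MS: "M \<subseteq> S" and Mmeet: "\<And>f g. f \<in> M \<Longrightarrow> g \<in> M \<Longrightarrow> f \<sqinter> g \<in> M"
    and Mup: "\<And>f c. f \<in> M \<Longrightarrow> c \<in> S \<Longrightarrow> f \<sqsubseteq> c \<Longrightarrow> c \<in> M"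
    using M(1) by (auto simp: lattice_filter_def)
  have escape: "\<exists>f\<in>M. f \<sqinter> c \<sqsubseteq> v" if c: "c \<in> S" "c \<notin> M" for c
  proof (rule ccontr)
    assume none: "\<not> (\<exists>f\<in>M. f \<sqinter> c \<sqsubseteq> v)"
    let ?G = "{d \<in> S. \<exists>f\<in>M. f \<sqinter> c \<sqsubseteq> d}"
    have "M \<subseteq> ?G" using MS c(1) meet_le1 by blast
    then have "?G = M" using maximal filter_adjoin[OF M(1) c(1)] none by blast
    moreover have "c \<in> ?G" using M(2) MS c(1) meet_le2 by blast
    ultimately show False using c(2) by blast
  qed
  show ?thesis
  proof (rule ccontr)
    assume "\<not> (a \<in> M \<or> b \<in> M)"
    then obtain f g where f: "f \<in> M" "f \<sqinter> a \<sqsubseteq> v" and g: "g \<in> M" "g \<sqinter> b \<sqsubseteq> v"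
      using escape ab by blast
    have fS: "f \<in> S" and gS: "g \<in> S" using f g MS by auto
    have fg: "f \<sqinter> g \<in> S" using fS gS by (rule meet_closed)
    have "f \<sqinter> g \<sqinter> a \<sqsubseteq> v"
      using le_trans[OF meet_closed[OF fg ab(1)] meet_closed[OF fS ab(1)] v(1)
          meet_le_meet[OF fg fS ab(1) meet_le1[OF fS gS]] f(2)] .
    moreover have "f \<sqinter> g \<sqinter> b \<sqsubseteq> v"
      using le_trans[OF meet_closed[OF fg ab(2)] meet_closed[OF gS ab(2)] v(1)
          meet_le_meet[OF fg gS ab(2) meet_le2[OF fS gS]] g(2)] .
    ultimately have "f \<sqinter> g \<sqinter> a \<squnion> f \<sqinter> g \<sqinter> b \<sqsubseteq> v"
      using join_le meet_closed fg ab(1,2) v(1) by blast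
    then have "f \<sqinter> g \<sqinter> (a \<squnion> b) \<sqsubseteq> v"
      using meet_join_distrib[OF fg ab(1,2)] by simp
    moreover have "f \<sqinter> g \<sqinter> (a \<squnion> b) \<in> M" using Mmeet f g ab(3) by blast
    ultimately have "v \<in> M" using Mup v(1) by blast
    then show False using v(2) by blast
  qed
qed

lemma prime_filter_point:
  assumes F: "lattice_filter F" and "top_elem \<in> F" and "bot_elem \<notin> F"
    and prime: "\<And>a b. \<lbrakk>a \<in> S; b \<in> S; a \<squnion> b \<in> F\<rbrakk> \<Longrightarrow> a \<in> F \<or> b \<in> F"
  shows "(\<lambda>c\<in>S. c \<in> F) \<in> dual_space as_bdl"
proof -
  have Fmeet: "\<And>f g. f \<in> F \<Longrightarrow> g \<in> F \<Longrightarrow> f \<sqinter> g \<in> F"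
    and Fup: "\<And>f c. f \<in> F \<Longrightarrow> c \<in> S \<Longrightarrow> f \<sqsubseteq> c \<Longrightarrow> c \<in> F"
    using F by (auto simp: lattice_filter_def)
  have "a \<sqinter> b \<in> F \<longleftrightarrow> a \<in> F \<and> b \<in> F" if "a \<in> S" "b \<in> S" for a b
    using Fmeet Fup[OF _ that(1) meet_le1[OF that]] Fup[OF _ that(2) meet_le2[OF that]] by blast
  moreover have "a \<squnion> b \<in> F \<longleftrightarrow> a \<in> F \<or> b \<in> F" if "a \<in> S" "b \<in> S" for a b
    using prime[OF that] Fup[OF _ join_closed[OF that] join_ge1[OF that]]
      Fup[OF _ join_closed[OF that] join_ge2[OF that]] by blast
  ultimately show ?thesis
    using assms(2,3) unfolding dual_space_def
    by (simp add: bot_closed top_closed meet_closed join_closed)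
qed

theorem prime_filter_separation:
  assumes u: "u \<in> S" and v: "v \<in> S" and "\<not> u \<sqsubseteq> v"
  shows "\<exists>x\<in>dual_space as_bdl. x u \<and> \<not> x v"
proof -
  define FF where "FF = {F. lattice_filter F \<and> u \<in> F \<and> v \<notin> F}"
  have "{b \<in> S. u \<sqsubseteq> b} \<in> FF"
    unfolding FF_def using principal_filter[OF u] u v assms(3) le_refl[OF u] by blast
  moreover have "\<Union>C \<in> FF" if "C \<noteq> {}" and chain: "subset.chain FF C" for C
  proof -
    have CFF: "C \<subseteq> FF" using chain by (simp add: subset_chain_def)
    have "lattice_filter (\<Union>C)"
      by (rule Union_chain_filter) (use chain in \<open>auto simp: subset_chain_def FF_def\<close>)
    moreover have "u \<in> \<Union>C" using CFF \<open>C \<noteq> {}\<close> by (auto simp: FF_def)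
    moreover have "v \<notin> \<Union>C" using CFF by (auto simp: FF_def)
    ultimately show ?thesis by (simp add: FF_def)
  qed
  ultimately obtain M where "M \<in> FF" and maximal: "\<forall>F\<in>FF. M \<subseteq> F \<longrightarrow> F = M"
    using subset_Zorn_nonempty[of FF] by blast
  then have M: "lattice_filter M" "u \<in> M" "v \<notin> M" by (auto simp: FF_def)
  have Mup: "\<And>f c. f \<in> M \<Longrightarrow> c \<in> S \<Longrightarrow> f \<sqsubseteq> c \<Longrightarrow> c \<in> M"
    using M(1) by (auto simp: lattice_filter_def)
  have "top_elem \<in> M" using Mup[OF M(2) top_closed le_top[OF u]] .
  moreover have "bot_elem \<notin> M" using Mup[OF _ v bot_le[OF v]] M(3) by blast
  moreover have "a \<in> M \<or> b \<in> M" if "a \<in> S" "b \<in> S" "a \<squnion> b \<in> M" for a b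
  proof (rule maximal_filter_prime[OF M(1,2) v M(3) _ that])
    fix F assume "lattice_filter F" "v \<notin> F" "M \<subseteq> F"
    then show "F = M" using maximal M(2) unfolding FF_def by blast
  qed
  ultimately have "(\<lambda>c\<in>S. c \<in> M) \<in> dual_space as_bdl"
    by (rule prime_filter_point[OF M(1)])
  then show ?thesis using u v M(2,3) by (intro bexI) auto
qed

lemma sublattice:
  assumes "T \<subseteq> S" "bot_elem \<in> T" "top_elem \<in> T"
    and "\<And>a b. \<lbrakk>a \<in> T; b \<in> T\<rbrakk> \<Longrightarrow> a \<sqinter> b \<in> T" "\<And>a b. \<lbrakk>a \<in> T; b \<in> T\<rbrakk> \<Longrightarrow> a \<squnion> b \<in> T"
  shows "bounded_distrib_lattice T (\<sqinter>) (\<squnion>) bot_elem top_elem"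
  using assms
  by unfold_locales
    (meson subsetD meet_commute join_commute meet_assoc join_assoc meet_absorb join_absorb
      meet_join_distrib bot_meet meet_top)+

end

lemma topspace_dual_topology: "topspace (dual_topology L) = dual_space L"
  unfolding dual_topology_def by (auto simp: dual_space_def PiE_def Pi_def)

lemma continuous_map_dual_topology_finite_dependence:
  assumes C: "finite C" "C \<subseteq> lcarrier L"
    and f: "\<forall>x\<in>dual_space L. f x \<in> Y"
    and dep: "\<forall>x\<in>dual_space L. \<forall>y\<in>dual_space L. (\<forall>c\<in>C. x c = y c) \<longrightarrow> f x = f y"
  shows "continuous_map (dual_topology L) (discrete_topology Y) f"
  unfolding continuous_map_def
proof (intro conjI allI impI)
  show "f \<in> topspace (dual_topology L) \<rightarrow> topspace (discrete_topology Y)"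
    using f by (auto simp: topspace_dual_topology)
  let ?P = "product_topology (\<lambda>_. discrete_topology (UNIV::bool set)) (lcarrier L)"
  fix U
  show "openin (dual_topology L) {x \<in> topspace (dual_topology L). f x \<in> U}"
  proof (subst openin_subopen, intro ballI)
    fix x0 assume x0: "x0 \<in> {x \<in> topspace (dual_topology L). f x \<in> U}"
    then have x0X: "x0 \<in> dual_space L" and fx0: "f x0 \<in> U" by (auto simp: topspace_dual_topology)
    define V where "V = (\<Inter>c\<in>C. {x \<in> topspace ?P. x c \<in> {x0 c}}) \<inter> topspace ?P"
    have "openin ?P V" unfolding V_def
    proof (rule openin_INT[OF C(1)])
      fix c assume "c \<in> C"
      then show "openin ?P {x \<in> topspace ?P. x c \<in> {x0 c}}"
        using C(2) by (intro openin_continuous_map_preimage[OF continuous_map_product_projection]) auto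
    qed
    then have "openin (dual_topology L) (V \<inter> dual_space L)"
      unfolding dual_topology_def openin_subtopology by blast
    moreover have "x0 \<in> V \<inter> dual_space L"
      using x0X unfolding V_def by (auto simp: dual_space_def PiE_def Pi_def)
    moreover have "V \<inter> dual_space L \<subseteq> {x \<in> topspace (dual_topology L). f x \<in> U}"
    proof
      fix x assume x: "x \<in> V \<inter> dual_space L"
      then have "f x = f x0" using dep x0X unfolding V_def by blast
      then show "x \<in> {x \<in> topspace (dual_topology L). f x \<in> U}"
        using x fx0 by (auto simp: topspace_dual_topology)
    qed
    ultimately show "\<exists>T. openin (dual_topology L) T \<and> x0 \<in> T \<and>
        T \<subseteq> {x \<in> topspace (dual_topology L). f x \<in> U}" by blast
  qed
qed

lemma pmv_hom_peval:
  assumes "pmv_structure A" and "pmv_hom A B h" and "\<And>i. v i \<in> carrier A"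
  shows "h (peval A v t) = peval B (\<lambda>i. h (v i)) t"
  using assms by (induction t) (auto simp: pmv_hom_def peval_closed)

lemma peval_priestley_power:
  assumes "x \<in> dual_space L"
  shows "peval (priestley_power n L) w t x = peval (PL n) (\<lambda>i. w i x) t"
  using assms by (induction t) (auto simp: priestley_power_def Let_def)

section \<open>Thresholds in an algebra of PMV_n\<close>

definition val3 :: "'a \<Rightarrow> 'a \<Rightarrow> 'a \<Rightarrow> nat \<Rightarrow> 'a" where
  "val3 a b c i = (if i = 0 then a else if i = 1 then b else c)"

locale PMV_algebra =
  fixes A :: "'a pmv_alg" and n :: nat
  assumes n_pos: "n \<ge> 1" and in_PMV: "A \<in> PMV n"
begin

lemma pmv_structure: "pmv_structure A"
  using in_PMV by (simp add: PMV_def)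

lemma operations_closed:
  shows zero_closed: "zero A \<in> carrier A" and one_closed: "one A \<in> carrier A"
    and "\<lbrakk>a \<in> carrier A; b \<in> carrier A\<rbrakk> \<Longrightarrow> meet A a b \<in> carrier A"
    and "\<lbrakk>a \<in> carrier A; b \<in> carrier A\<rbrakk> \<Longrightarrow> join A a b \<in> carrier A"
    and oplus_closed: "\<lbrakk>a \<in> carrier A; b \<in> carrier A\<rbrakk> \<Longrightarrow> oplus A a b \<in> carrier A"
    and odot_closed: "\<lbrakk>a \<in> carrier A; b \<in> carrier A\<rbrakk> \<Longrightarrow> odot A a b \<in> carrier A"
  using pmv_structure by (auto simp: pmv_structure_def)

lemma grid_identity:
  assumes "\<And>w. \<forall>i. w i \<le> n \<Longrightarrow> grid_eval n w s = grid_eval n w t"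
    and "\<And>i. v i \<in> carrier A"
  shows "peval A v s = peval A v t"
  using PMV_identity[OF in_PMV n_pos assms] .

sublocale lattice: bounded_distrib_lattice "carrier A" "meet A" "join A" "zero A" "one A"
proof unfold_locales
  fix a b assume ab: "a \<in> carrier A" "b \<in> carrier A"
  have "peval A (val3 a b b) (PMeet (PVar 0) (PVar 1)) = peval A (val3 a b b) (PMeet (PVar 1) (PVar 0))"
    using ab by (intro grid_identity) (auto simp: val3_def)
  then show "meet A a b = meet A b a" by (simp add: val3_def)
next
  fix a b assume ab: "a \<in> carrier A" "b \<in> carrier A"
  have "peval A (val3 a b b) (PJoin (PVar 0) (PVar 1)) = peval A (val3 a b b) (PJoin (PVar 1) (PVar 0))"
    using ab by (intro grid_identity) (auto simp: val3_def)
  then show "join A a b = join A b a" by (simp add: val3_def)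
next
  fix a b c assume abc: "a \<in> carrier A" "b \<in> carrier A" "c \<in> carrier A"
  have "peval A (val3 a b c) (PMeet (PMeet (PVar 0) (PVar 1)) (PVar 2))
      = peval A (val3 a b c) (PMeet (PVar 0) (PMeet (PVar 1) (PVar 2)))"
    using abc by (intro grid_identity) (auto simp: val3_def)
  then show "meet A (meet A a b) c = meet A a (meet A b c)" by (simp add: val3_def)
next
  fix a b c assume abc: "a \<in> carrier A" "b \<in> carrier A" "c \<in> carrier A"
  have "peval A (val3 a b c) (PJoin (PJoin (PVar 0) (PVar 1)) (PVar 2))
      = peval A (val3 a b c) (PJoin (PVar 0) (PJoin (PVar 1) (PVar 2)))"
    using abc by (intro grid_identity) (auto simp: val3_def)
  then show "join A (join A a b) c = join A a (join A b c)" by (simp add: val3_def)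
next
  fix a b assume ab: "a \<in> carrier A" "b \<in> carrier A"
  have "peval A (val3 a b b) (PMeet (PVar 0) (PJoin (PVar 0) (PVar 1))) = peval A (val3 a b b) (PVar 0)"
    using ab by (intro grid_identity) (auto simp: val3_def)
  then show "meet A a (join A a b) = a" by (simp add: val3_def)
next
  fix a b assume ab: "a \<in> carrier A" "b \<in> carrier A"
  have "peval A (val3 a b b) (PJoin (PVar 0) (PMeet (PVar 0) (PVar 1))) = peval A (val3 a b b) (PVar 0)"
    using ab by (intro grid_identity) (auto simp: val3_def)
  then show "join A a (meet A a b) = a" by (simp add: val3_def)
next
  fix a b c assume abc: "a \<in> carrier A" "b \<in> carrier A" "c \<in> carrier A"
  have "peval A (val3 a b c) (PMeet (PVar 0) (PJoin (PVar 1) (PVar 2)))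
      = peval A (val3 a b c) (PJoin (PMeet (PVar 0) (PVar 1)) (PMeet (PVar 0) (PVar 2)))"
    using abc by (intro grid_identity) (auto simp: val3_def)
  then show "meet A a (join A b c) = join A (meet A a b) (meet A a c)" by (simp add: val3_def)
next
  fix a assume a: "a \<in> carrier A"
  have "peval A (\<lambda>_. a) (PMeet PZero (PVar 0)) = peval A (\<lambda>_. a) PZero"
    using a by (intro grid_identity) auto
  then show "meet A (zero A) a = zero A" by simp
next
  fix a assume a: "a \<in> carrier A"
  have "peval A (\<lambda>_. a) (PMeet (PVar 0) POne) = peval A (\<lambda>_. a) (PVar 0)"
    using a by (intro grid_identity) auto
  then show "meet A a (one A) = a" by simp
qed (simp_all add: operations_closed)

notation lattice.lattice_le (infix "\<sqsubseteq>" 50)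

abbreviation idempotents :: "'a set" where
  "idempotents \<equiv> lcarrier (skeleton A)"

lemma idempotents_iff: "e \<in> idempotents \<longleftrightarrow> e \<in> carrier A \<and> oplus A e e = e"
  by (simp add: skeleton_def)

lemma skeleton_lattice: "bounded_distrib_lattice idempotents (meet A) (join A) (zero A) (one A)"
proof (rule lattice.sublattice)
  have "peval A (\<lambda>_. zero A) (POplus PZero PZero) = peval A (\<lambda>_. zero A) PZero"
    using zero_closed by (intro grid_identity) auto
  then show "zero A \<in> idempotents" using zero_closed by (simp add: idempotents_iff)
  have "peval A (\<lambda>_. one A) (POplus POne POne) = peval A (\<lambda>_. one A) POne"
    using one_closed by (intro grid_identity) auto
  then show "one A \<in> idempotents" using one_closed by (simp add: idempotents_iff)
next
  fix a b assume "a \<in> idempotents" "b \<in> idempotents"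
  then have ab: "a \<in> carrier A" "b \<in> carrier A" "oplus A a a = a" "oplus A b b = b"
    by (simp_all add: idempotents_iff)
  have "peval A (val3 a b b) (POplus (PMeet (PVar 0) (PVar 1)) (PMeet (PVar 0) (PVar 1)))
      = peval A (val3 a b b) (PMeet (POplus (PVar 0) (PVar 0)) (POplus (PVar 1) (PVar 1)))"
    using ab by (intro grid_identity) (auto simp: val3_def)
  then show "meet A a b \<in> idempotents" using ab by (simp add: idempotents_iff val3_def lattice.meet_closed)
  have "peval A (val3 a b b) (POplus (PJoin (PVar 0) (PVar 1)) (PJoin (PVar 0) (PVar 1)))
      = peval A (val3 a b b) (PJoin (POplus (PVar 0) (PVar 0)) (POplus (PVar 1) (PVar 1)))"
    using ab by (intro grid_identity) (auto simp: val3_def)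
  then show "join A a b \<in> idempotents" using ab by (simp add: idempotents_iff val3_def lattice.join_closed)
qed (auto simp: idempotents_iff)

abbreviation thr :: "nat \<Rightarrow> 'a \<Rightarrow> 'a" where
  "thr m a \<equiv> threshold A n m a"

lemma threshold_closed: "a \<in> carrier A \<Longrightarrow> thr m a \<in> carrier A"
  unfolding threshold_def by (rule peval_closed[OF pmv_structure]) simp

lemma threshold_0: "thr 0 a = one A"
  by (simp add: threshold_def threshold_term_def)

lemma threshold_above: "n < m \<Longrightarrow> thr m a = zero A"
  by (simp add: threshold_def threshold_term_def)

lemma threshold_idempotent:
  assumes "a \<in> carrier A"
  shows "oplus A (thr m a) (thr m a) = thr m a"
proof -
  let ?t = "threshold_term n m (PVar 0)"
  have "peval A (\<lambda>_. a) (POplus ?t ?t) = peval A (\<lambda>_. a) ?t"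
    using assms by (intro grid_identity) (auto simp: grid_eval_threshold_term[OF n_pos])
  then show ?thesis by (simp add: peval_threshold_term)
qed

lemma threshold_in_skeleton: "a \<in> carrier A \<Longrightarrow> thr m a \<in> idempotents"
  by (simp add: idempotents_iff threshold_closed threshold_idempotent)

lemma threshold_antimono:
  assumes "a \<in> carrier A" and "k \<le> m"
  shows "thr m a \<sqsubseteq> thr k a"
proof -
  have "peval A (\<lambda>_. a) (PMeet (threshold_term n m (PVar 0)) (threshold_term n k (PVar 0)))
      = peval A (\<lambda>_. a) (threshold_term n m (PVar 0))"
    using assms by (intro grid_identity) (auto simp: grid_eval_threshold_term[OF n_pos])
  then show ?thesis by (simp add: peval_threshold_term lattice.lattice_le_def)
qed

lemma threshold_meet:
  assumes "a \<in> carrier A" and "b \<in> carrier A"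
  shows "thr m (meet A a b) = meet A (thr m a) (thr m b)"
proof -
  have "peval A (val3 a b b) (threshold_term n m (PMeet (PVar 0) (PVar 1)))
      = peval A (val3 a b b) (PMeet (threshold_term n m (PVar 0)) (threshold_term n m (PVar 1)))"
    using assms by (intro grid_identity) (auto simp: grid_eval_threshold_term[OF n_pos] val3_def)
  then show ?thesis by (simp add: peval_threshold_term val3_def)
qed

lemma threshold_join:
  assumes "a \<in> carrier A" and "b \<in> carrier A"
  shows "thr m (join A a b) = join A (thr m a) (thr m b)"
proof -
  have "peval A (val3 a b b) (threshold_term n m (PJoin (PVar 0) (PVar 1)))
      = peval A (val3 a b b) (PJoin (threshold_term n m (PVar 0)) (threshold_term n m (PVar 1)))"
    using assms by (intro grid_identity) (auto simp: grid_eval_threshold_term[OF n_pos] val3_def)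
  then show ?thesis by (simp add: peval_threshold_term val3_def)
qed

lemma threshold_oplus_lower:
  assumes "a \<in> carrier A" and "b \<in> carrier A" and "i + j \<le> n"
  shows "meet A (thr i a) (thr j b) \<sqsubseteq> thr (i + j) (oplus A a b)"
proof -
  have "peval A (val3 a b b) (PMeet (PMeet (threshold_term n i (PVar 0)) (threshold_term n j (PVar 1)))
                                    (threshold_term n (i + j) (POplus (PVar 0) (PVar 1))))
      = peval A (val3 a b b) (PMeet (threshold_term n i (PVar 0)) (threshold_term n j (PVar 1)))"
    using assms by (intro grid_identity) (auto simp: grid_eval_threshold_term[OF n_pos] val3_def)
  then show ?thesis by (simp add: peval_threshold_term val3_def lattice.lattice_le_def)
qed

lemma threshold_oplus_upper:
  assumes "a \<in> carrier A" and "b \<in> carrier A" and "p + q < m"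
  shows "thr m (oplus A a b) \<sqsubseteq> join A (thr (Suc p) a) (thr (Suc q) b)"
proof -
  have "peval A (val3 a b b) (PMeet (threshold_term n m (POplus (PVar 0) (PVar 1)))
                    (PJoin (threshold_term n (Suc p) (PVar 0)) (threshold_term n (Suc q) (PVar 1))))
      = peval A (val3 a b b) (threshold_term n m (POplus (PVar 0) (PVar 1)))"
    using assms by (intro grid_identity) (auto simp: grid_eval_threshold_term[OF n_pos] val3_def)
  then show ?thesis by (simp add: peval_threshold_term val3_def lattice.lattice_le_def)
qed

lemma threshold_odot_lower:
  assumes "a \<in> carrier A" and "b \<in> carrier A" and "m + n \<le> i + j"
  shows "meet A (thr i a) (thr j b) \<sqsubseteq> thr m (odot A a b)"
proof -
  have "peval A (val3 a b b) (PMeet (PMeet (threshold_term n i (PVar 0)) (threshold_term n j (PVar 1)))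
                                    (threshold_term n m (POdot (PVar 0) (PVar 1))))
      = peval A (val3 a b b) (PMeet (threshold_term n i (PVar 0)) (threshold_term n j (PVar 1)))"
    using assms by (intro grid_identity) (auto simp: grid_eval_threshold_term[OF n_pos] val3_def)
  then show ?thesis by (simp add: peval_threshold_term val3_def lattice.lattice_le_def)
qed

lemma threshold_odot_upper:
  assumes "a \<in> carrier A" and "b \<in> carrier A" and "p + q < m + n" and "1 \<le> m"
  shows "thr m (odot A a b) \<sqsubseteq> join A (thr (Suc p) a) (thr (Suc q) b)"
proof -
  have "peval A (val3 a b b) (PMeet (threshold_term n m (POdot (PVar 0) (PVar 1)))
                    (PJoin (threshold_term n (Suc p) (PVar 0)) (threshold_term n (Suc q) (PVar 1))))
      = peval A (val3 a b b) (threshold_term n m (POdot (PVar 0) (PVar 1)))"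
    using assms by (intro grid_identity) (auto simp: grid_eval_threshold_term[OF n_pos] val3_def)
  then show ?thesis by (simp add: peval_threshold_term val3_def lattice.lattice_le_def)
qed

lemma threshold_zero:
  assumes "1 \<le> m"
  shows "thr m (zero A) = zero A"
proof -
  have "peval A (\<lambda>_. zero A) (threshold_term n m PZero) = peval A (\<lambda>_. zero A) PZero"
    using assms zero_closed by (intro grid_identity) (auto simp: grid_eval_threshold_term[OF n_pos])
  then show ?thesis by (simp add: peval_threshold_term)
qed

lemma threshold_one:
  assumes "m \<le> n"
  shows "thr m (one A) = one A"
proof -
  have "peval A (\<lambda>_. one A) (threshold_term n m POne) = peval A (\<lambda>_. one A) POne"
    using assms one_closed by (intro grid_identity) (auto simp: grid_eval_threshold_term[OF n_pos])
  then show ?thesis by (simp add: peval_threshold_term)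
qed

lemma mult_term_idempotent:
  assumes "oplus A e e = e" and "1 \<le> k"
  shows "peval A (\<lambda>_. e) (mult_term k (PVar 0)) = e"
  using assms(2)
proof (induction k)
  case (Suc k)
  then show ?case using assms(1) by (cases "k = 0") auto
qed simp

lemma threshold_fixes_idempotents:
  assumes "e \<in> idempotents" and "1 \<le> m" and "m \<le> n"
  shows "thr m e = e"
proof -
  have e: "e \<in> carrier A" "oplus A e e = e" using assms(1) by (simp_all add: idempotents_iff)
  have "grid_eval n w (threshold_term n m (mult_term n (PVar 0)))
      = grid_eval n w (mult_term n (PVar 0))" if "\<forall>i. w i \<le> n" for w
    using assms(2,3) that spec[OF that, of 0] grid_eval_mult_term[of n w "PVar 0" n]
    by (cases "w 0") (auto simp: grid_eval_threshold_term[OF n_pos])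
  then have "peval A (\<lambda>_. e) (threshold_term n m (mult_term n (PVar 0)))
      = peval A (\<lambda>_. e) (mult_term n (PVar 0))"
    using e by (intro grid_identity)
  then show ?thesis
    using mult_term_idempotent[OF e(2) n_pos] by (simp add: peval_threshold_term)
qed

lemma threshold_chain_steps:
  assumes "a \<in> carrier A" and "b \<in> carrier A"
  shows "join A (meet A a b) (meet A (join A a b) (thr k (meet A a b)))
           \<sqsubseteq> join A (meet A a b) (meet A (join A a b) (thr (Suc k) (join A a b)))"
    and "join A (meet A a b) (meet A (join A a b) (thr (Suc k) (join A a b)))
           \<sqsubseteq> join A (meet A a b) (meet A (join A a b) (thr k (join A a b)))"
proof -
  let ?p = "PMeet (PVar 0) (PVar 1)" and ?q = "PJoin (PVar 0) (PVar 1)"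
  have "peval A (val3 a b b) (PMeet (PJoin ?p (PMeet ?q (threshold_term n k ?p)))
                                    (PJoin ?p (PMeet ?q (threshold_term n (Suc k) ?q))))
      = peval A (val3 a b b) (PJoin ?p (PMeet ?q (threshold_term n k ?p)))"
    using assms by (intro grid_identity) (auto simp: grid_eval_threshold_term[OF n_pos] val3_def)
  then show "join A (meet A a b) (meet A (join A a b) (thr k (meet A a b)))
           \<sqsubseteq> join A (meet A a b) (meet A (join A a b) (thr (Suc k) (join A a b)))"
    by (simp add: peval_threshold_term val3_def lattice.lattice_le_def)
  have "peval A (val3 a b b) (PMeet (PJoin ?p (PMeet ?q (threshold_term n (Suc k) ?q)))
                                    (PJoin ?p (PMeet ?q (threshold_term n k ?q))))
      = peval A (val3 a b b) (PJoin ?p (PMeet ?q (threshold_term n (Suc k) ?q)))"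
    using assms by (intro grid_identity) (auto simp: grid_eval_threshold_term[OF n_pos] val3_def)
  then show "join A (meet A a b) (meet A (join A a b) (thr (Suc k) (join A a b)))
           \<sqsubseteq> join A (meet A a b) (meet A (join A a b) (thr k (join A a b)))"
    by (simp add: peval_threshold_term val3_def lattice.lattice_le_def)
qed

text \<open>With p = a \<sqinter> b and q = a \<squnion> b, the elements r_k = p \<squnion> (q \<sqinter> t_k(q)) decrease in k, and
  they also increase once t_k(p) = t_k(q), because on the grid p \<ge> k/n and q < (k+1)/n force
  q \<le> p. Hence q = r_0 = r_(n+1) = p.\<close>
lemma thresholds_determine:
  assumes a: "a \<in> carrier A" and b: "b \<in> carrier A" and same: "\<And>m. thr m a = thr m b"
  shows "a = b"
proof -
  define p where "p = meet A a b"
  define q where "q = join A a b"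
  have p: "p \<in> carrier A" and q: "q \<in> carrier A"
    unfolding p_def q_def using a b by (simp_all add: lattice.meet_closed lattice.join_closed)
  have "thr k p = thr k a" "thr k q = thr k a" for k
    unfolding p_def q_def using same[of k] threshold_closed[OF a] threshold_closed[OF b]
    by (simp_all add: threshold_meet[OF a b] threshold_join[OF a b] lattice.meet_idem lattice.join_idem)
  then have pq: "thr k p = thr k q" for k by simp
  define r where "r k = join A p (meet A q (thr k q))" for k
  have r: "r k \<in> carrier A" for k
    unfolding r_def using p q threshold_closed[OF q]
    by (simp add: lattice.meet_closed lattice.join_closed)
  have "r (Suc k) = r k" for k
    using threshold_chain_steps[OF a b, of k] pq[of k] lattice.le_antisym[OF r r]
    unfolding r_def p_def[symmetric] q_def[symmetric] by metis
  then have "r k = r 0" for k by (induction k) simp_all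
  moreover have "r 0 = q"
    unfolding r_def using p q lattice.le_trans[OF p a q] lattice.meet_le1[OF a b] lattice.join_ge1[OF a b]
    by (simp add: threshold_0 lattice.meet_top lattice.le_iff_join p_def q_def)
  moreover have "r (Suc n) = p"
    unfolding r_def using p q
    by (simp add: threshold_above lattice.meet_commute[OF q lattice.bot_closed] lattice.bot_meet
        lattice.join_bot)
  ultimately have "meet A a b = join A a b" unfolding p_def q_def by metis
  then show ?thesis using lattice.meet_eq_join_imp_eq a b by blast
qed

end

section \<open>Levels at points of the dual space\<close>

context PMV_algebra
begin

abbreviation X :: "('a \<Rightarrow> bool) set" where
  "X \<equiv> dual_space (skeleton A)"

lemma point_meet: "\<lbrakk>x \<in> X; u \<in> idempotents; v \<in> idempotents\<rbrakk> \<Longrightarrow> x (meet A u v) \<longleftrightarrow> x u \<and> x v"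
  by (simp add: dual_space_def skeleton_def)

lemma point_join: "\<lbrakk>x \<in> X; u \<in> idempotents; v \<in> idempotents\<rbrakk> \<Longrightarrow> x (join A u v) \<longleftrightarrow> x u \<or> x v"
  by (simp add: dual_space_def skeleton_def)

lemma point_zero: "x \<in> X \<Longrightarrow> \<not> x (zero A)"
  by (simp add: dual_space_def skeleton_def)

lemma point_one: "x \<in> X \<Longrightarrow> x (one A)"
  by (simp add: dual_space_def skeleton_def)

lemma point_mono: "\<lbrakk>x \<in> X; u \<in> idempotents; v \<in> idempotents; u \<sqsubseteq> v; x u\<rbrakk> \<Longrightarrow> x v"
  by (metis point_meet lattice.lattice_le_def)

lemma points_separate_idempotents:
  assumes "u \<in> idempotents" and "v \<in> idempotents" and "u \<noteq> v"
  shows "\<exists>x\<in>X. x u \<noteq> x v"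
proof -
  interpret skeleton: bounded_distrib_lattice idempotents "meet A" "join A" "zero A" "one A"
    by (rule skeleton_lattice)
  have as_bdl: "skeleton.as_bdl = skeleton A" by (simp add: skeleton_def)
  have "\<not> u \<sqsubseteq> v \<or> \<not> v \<sqsubseteq> u"
    using assms lattice.le_antisym by (auto simp: idempotents_iff)
  then show ?thesis
    using skeleton.prime_filter_separation assms(1,2) unfolding as_bdl skeleton.lattice_le_def
      lattice.lattice_le_def by metis
qed

lemmas skeleton_meet_closed = bounded_distrib_lattice.meet_closed[OF skeleton_lattice]
lemmas skeleton_join_closed = bounded_distrib_lattice.join_closed[OF skeleton_lattice]

definition level :: "('a \<Rightarrow> bool) \<Rightarrow> 'a \<Rightarrow> nat" where
  "level x a = Max ({0} \<union> {m \<in> {1..n}. x (thr m a)})"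

lemma level_le: "level x a \<le> n"
  unfolding level_def by (auto intro!: Max.boundedI)

lemma level_iff:
  assumes x: "x \<in> X" and a: "a \<in> carrier A"
  shows "x (thr m a) \<longleftrightarrow> m \<le> level x a"
proof -
  have fin: "finite ({0} \<union> {m \<in> {1..n}. x (thr m a)})" by simp
  consider "m = 0" | "n < m" | "1 \<le> m" "m \<le> n" by linarith
  then show ?thesis
  proof cases
    case 1
    then show ?thesis using point_one[OF x] by (simp add: threshold_0)
  next
    case 2
    then show ?thesis using point_zero[OF x] level_le[of x a] by (simp add: threshold_above)
  next
    case 3
    show ?thesis
    proof
      assume "x (thr m a)"
      then show "m \<le> level x a" unfolding level_def using 3 fin by (intro Max_ge) auto
    next
      assume m: "m \<le> level x a"
      have "level x a \<in> {0} \<union> {m \<in> {1..n}. x (thr m a)}"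
        unfolding level_def using fin by (rule Max_in) simp
      then have "x (thr (level x a) a)" using m 3 by auto
      then show "x (thr m a)"
        using point_mono[OF x threshold_in_skeleton[OF a] threshold_in_skeleton[OF a]
            threshold_antimono[OF a m]] by blast
    qed
  qed
qed

lemma level_unique:
  assumes "x \<in> X" and "a \<in> carrier A" and "\<And>m. x (thr m a) \<longleftrightarrow> m \<le> l"
  shows "level x a = l"
  using level_iff[OF assms(1,2)] assms(3) by (metis le_antisym order_refl)

lemma level_meet:
  assumes x: "x \<in> X" and a: "a \<in> carrier A" and b: "b \<in> carrier A"
  shows "level x (meet A a b) = min (level x a) (level x b)"
  using a b
  by (intro level_unique[OF x lattice.meet_closed[OF a b]])
    (simp add: threshold_meet point_meet[OF x] threshold_in_skeleton level_iff[OF x])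

lemma level_join:
  assumes x: "x \<in> X" and a: "a \<in> carrier A" and b: "b \<in> carrier A"
  shows "level x (join A a b) = max (level x a) (level x b)"
  using a b
  by (intro level_unique[OF x lattice.join_closed[OF a b]])
    (auto simp: threshold_join point_join[OF x] threshold_in_skeleton level_iff[OF x])

lemma level_oplus:
  assumes x: "x \<in> X" and a: "a \<in> carrier A" and b: "b \<in> carrier A"
  shows "level x (oplus A a b) = min n (level x a + level x b)"
proof (rule level_unique[OF x oplus_closed[OF a b]])
  fix m
  let ?la = "level x a" and ?lb = "level x b"
  have ab: "thr k (oplus A a b) \<in> idempotents" for k using a b by (simp add: threshold_in_skeleton oplus_closed)
  show "x (thr m (oplus A a b)) \<longleftrightarrow> m \<le> min n (?la + ?lb)"
  proof
    assume xm: "x (thr m (oplus A a b))"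
    then have "m \<le> n" using point_zero[OF x] threshold_above by (metis not_le)
    moreover have "m \<le> ?la + ?lb"
    proof (rule ccontr)
      assume "\<not> m \<le> ?la + ?lb"
      then have "x (join A (thr (Suc ?la) a) (thr (Suc ?lb) b))"
        using point_mono[OF x ab skeleton_join_closed threshold_oplus_upper[OF a b] xm]
          threshold_in_skeleton[OF a] threshold_in_skeleton[OF b] by simp
      then show False using a b by (simp add: point_join[OF x] threshold_in_skeleton level_iff[OF x])
    qed
    ultimately show "m \<le> min n (?la + ?lb)" by simp
  next
    assume m: "m \<le> min n (?la + ?lb)"
    define i where "i = min m ?la"
    define j where "j = m - i"
    have ij: "i + j = m" "i \<le> ?la" "j \<le> ?lb" "i + j \<le> n" using m unfolding i_def j_def by auto
    then have "x (meet A (thr i a) (thr j b))"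
      using a b by (simp add: point_meet[OF x] threshold_in_skeleton level_iff[OF x])
    then have "x (thr (i + j) (oplus A a b))"
      using point_mono[OF x skeleton_meet_closed ab threshold_oplus_lower[OF a b ij(4)]]
        threshold_in_skeleton[OF a] threshold_in_skeleton[OF b] by simp
    then show "x (thr m (oplus A a b))" using ij(1) by simp
  qed
qed

lemma level_odot:
  assumes x: "x \<in> X" and a: "a \<in> carrier A" and b: "b \<in> carrier A"
  shows "level x (odot A a b) = level x a + level x b - n"
proof (rule level_unique[OF x odot_closed[OF a b]])
  fix m
  let ?la = "level x a" and ?lb = "level x b"
  have ab: "thr k (odot A a b) \<in> idempotents" for k using a b by (simp add: threshold_in_skeleton odot_closed)
  show "x (thr m (odot A a b)) \<longleftrightarrow> m \<le> ?la + ?lb - n"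
  proof
    assume xm: "x (thr m (odot A a b))"
    show "m \<le> ?la + ?lb - n"
    proof (rule ccontr)
      assume "\<not> m \<le> ?la + ?lb - n"
      then have "?la + ?lb < m + n" "1 \<le> m" by auto
      then have "x (join A (thr (Suc ?la) a) (thr (Suc ?lb) b))"
        using point_mono[OF x ab skeleton_join_closed threshold_odot_upper[OF a b] xm]
          threshold_in_skeleton[OF a] threshold_in_skeleton[OF b] by simp
      then show False using a b by (simp add: point_join[OF x] threshold_in_skeleton level_iff[OF x])
    qed
  next
    assume m: "m \<le> ?la + ?lb - n"
    show "x (thr m (odot A a b))"
    proof (cases "m = 0")
      case True
      then show ?thesis using point_one[OF x] by (simp add: threshold_0)
    next
      case False
      then have "m + n \<le> ?la + ?lb" using m by simp
      moreover have "x (meet A (thr ?la a) (thr ?lb b))"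
        using a b by (simp add: point_meet[OF x] threshold_in_skeleton level_iff[OF x])
      ultimately show ?thesis
        using point_mono[OF x skeleton_meet_closed ab threshold_odot_lower[OF a b]]
          threshold_in_skeleton[OF a] threshold_in_skeleton[OF b] by simp
    qed
  qed
qed

lemma level_zero:
  assumes x: "x \<in> X"
  shows "level x (zero A) = 0"
proof (rule level_unique[OF x zero_closed])
  fix m
  show "x (thr m (zero A)) \<longleftrightarrow> m \<le> 0"
    using point_one[OF x] point_zero[OF x] threshold_zero[of m]
    by (cases "m = 0") (auto simp: threshold_0)
qed

lemma level_one:
  assumes x: "x \<in> X"
  shows "level x (one A) = n"
proof (rule level_unique[OF x one_closed])
  fix m
  show "x (thr m (one A)) \<longleftrightarrow> m \<le> n"
    using point_one[OF x] point_zero[OF x] threshold_one[of m] threshold_above[of m]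
    by (cases "m \<le> n") auto
qed

lemma level_idempotent:
  assumes x: "x \<in> X" and e: "e \<in> idempotents"
  shows "level x e = (if x e then n else 0)"
proof (rule level_unique[OF x])
  show "e \<in> carrier A" using e by (simp add: idempotents_iff)
  fix m
  consider "m = 0" | "n < m" | "1 \<le> m" "m \<le> n" by linarith
  then show "x (thr m e) \<longleftrightarrow> m \<le> (if x e then n else 0)"
  proof cases
    case 1
    then show ?thesis using point_one[OF x] by (simp add: threshold_0)
  next
    case 2
    then show ?thesis using point_zero[OF x] by (simp add: threshold_above)
  next
    case 3
    then show ?thesis using threshold_fixes_idempotents[OF e] by auto
  qed
qed

lemma level_mono:
  assumes x: "x \<in> X" and y: "y \<in> X" and xy: "dual_le (skeleton A) x y" and a: "a \<in> carrier A"
  shows "level x a \<le> level y a"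
proof -
  have "x (thr (level x a) a)" using level_iff[OF x a] by simp
  then have "y (thr (level x a) a)" using xy threshold_in_skeleton[OF a] by (simp add: dual_le_def)
  then show ?thesis using level_iff[OF y a] by simp
qed

end

section \<open>The unit\<close>

context PMV_algebra
begin

definition eta :: "'a \<Rightarrow> ('a \<Rightarrow> bool) \<Rightarrow> real" where
  "eta a = (\<lambda>x\<in>X. real (level x a) / real n)"

lemma eta_in_priestley_power:
  assumes a: "a \<in> carrier A"
  shows "eta a \<in> carrier (priestley_power n (skeleton A))"
proof -
  let ?C = "(\<lambda>m. thr m a) ` {1..n}"
  have "continuous_map (dual_topology (skeleton A)) (discrete_topology (carrier (PL n))) (eta a)"
  proof (rule continuous_map_dual_topology_finite_dependence[of ?C])
    show "?C \<subseteq> idempotents" using threshold_in_skeleton[OF a] by auto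
    show "\<forall>x\<in>X. eta a x \<in> carrier (PL n)" using level_le by (auto simp: eta_def PL_def)
    show "\<forall>x\<in>X. \<forall>y\<in>X. (\<forall>c\<in>?C. x c = y c) \<longrightarrow> eta a x = eta a y"
      unfolding eta_def level_def by (auto intro!: arg_cong[where f = Max])
  qed simp
  moreover have "\<forall>x\<in>X. \<forall>y\<in>X. dual_le (skeleton A) x y \<longrightarrow> eta a x \<le> eta a y"
    using level_mono[OF _ _ _ a] by (simp add: eta_def divide_right_mono)
  ultimately show ?thesis by (simp add: priestley_power_def Let_def eta_def)
qed

lemma eta_hom: "pmv_hom A (priestley_power n (skeleton A)) eta"
  unfolding pmv_hom_def
proof (intro conjI ballI)
  have np: "real n > 0" using n_pos by simp
  show "eta a \<in> carrier (priestley_power n (skeleton A))" if "a \<in> carrier A" for a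
    using eta_in_priestley_power that .
  show "eta (zero A) = zero (priestley_power n (skeleton A))"
    unfolding eta_def by (simp add: priestley_power_def Let_def PL_def level_zero cong: restrict_cong)
  show "eta (one A) = one (priestley_power n (skeleton A))"
    unfolding eta_def using np
    by (simp add: priestley_power_def Let_def PL_def level_one cong: restrict_cong)
  fix a b assume a: "a \<in> carrier A" and b: "b \<in> carrier A"
  show "eta (meet A a b) = meet (priestley_power n (skeleton A)) (eta a) (eta b)"
    unfolding eta_def
    by (simp add: priestley_power_def Let_def PL_def min_max_grid level_meet a b cong: restrict_cong)
  show "eta (join A a b) = join (priestley_power n (skeleton A)) (eta a) (eta b)"
    unfolding eta_def
    by (simp add: priestley_power_def Let_def PL_def min_max_grid level_join a b cong: restrict_cong)
  show "eta (oplus A a b) = oplus (priestley_power n (skeleton A)) (eta a) (eta b)"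
    unfolding eta_def using oplus_grid[OF n_pos]
    by (simp add: priestley_power_def Let_def PL_def level_oplus a b cong: restrict_cong)
  show "eta (odot A a b) = odot (priestley_power n (skeleton A)) (eta a) (eta b)"
    unfolding eta_def using odot_grid[OF n_pos]
    by (simp add: priestley_power_def Let_def PL_def level_odot a b cong: restrict_cong)
qed

lemma eta_idempotent:
  assumes "e \<in> idempotents"
  shows "eta e = idem_point A e"
  unfolding eta_def idem_point_def using level_idempotent[OF _ assms] n_pos
  by (auto intro!: restrict_ext)

lemma eta_inj: "inj_on eta (carrier A)"
proof (rule inj_onI)
  fix a b assume a: "a \<in> carrier A" and b: "b \<in> carrier A" and eq: "eta a = eta b"
  have "level x a = level x b" if "x \<in> X" for x
    using fun_cong[OF eq, of x] that n_pos by (simp add: eta_def)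
  then have "x (thr m a) = x (thr m b)" if "x \<in> X" for x m
    using level_iff[OF that a] level_iff[OF that b] that by simp
  then have "thr m a = thr m b" for m
    using points_separate_idempotents threshold_in_skeleton[OF a] threshold_in_skeleton[OF b] by blast
  then show "a = b" by (rule thresholds_determine[OF a b])
qed

lemma eta_unique:
  assumes h: "pmv_hom A (priestley_power n (skeleton A)) h"
    and h_idem: "\<forall>e\<in>idempotents. h e = idem_point A e" and a: "a \<in> carrier A"
  shows "h a = eta a"
proof (rule extensionalityI)
  have ha: "h a \<in> carrier (priestley_power n (skeleton A))" using h a by (simp add: pmv_hom_def)
  then show "h a \<in> extensional X" by (simp add: priestley_power_def Let_def)
  show "eta a \<in> extensional X" by (simp add: eta_def)
  fix x assume x: "x \<in> X"
  have "h a x \<in> carrier (PL n)"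
    using ha x by (auto simp: priestley_power_def Let_def continuous_map_def topspace_dual_topology)
  then obtain j where j: "j \<le> n" "h a x = real j / real n" by (auto simp: PL_def)
  have "x (thr m a) \<longleftrightarrow> m \<le> j" for m
  proof -
    have "h (thr m a) = peval (priestley_power n (skeleton A)) (\<lambda>_. h a) (threshold_term n m (PVar 0))"
      unfolding threshold_def using pmv_hom_peval[OF pmv_structure h, of "\<lambda>_. a"] a by simp
    then have "h (thr m a) x = (if m \<le> j then 1 else 0)"
      using peval_priestley_power[OF x] peval_PL_threshold_term[OF n_pos j(1)] j(2) by simp
    moreover have "h (thr m a) x = (if x (thr m a) then 1 else 0)"
      using h_idem threshold_in_skeleton[OF a] x by (simp add: idem_point_def)
    ultimately show ?thesis by (simp split: if_splits)
  qed
  then have "level x a = j" by (rule level_unique[OF x a])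
  then show "h a x = eta a x" using j x by (simp add: eta_def)
qed

end

theorem corollary4p8:
  fixes n :: nat and A :: "'a pmv_alg"
  assumes "n \<ge> 1" and "A \<in> PMV n"
  shows "\<exists>\<eta>. pmv_hom A (priestley_power n (skeleton A)) \<eta>
            \<and> inj_on \<eta> (carrier A)
            \<and> (\<forall>e\<in>lcarrier (skeleton A). \<eta> e = idem_point A e)
            \<and> (\<forall>\<eta>'. pmv_hom A (priestley_power n (skeleton A)) \<eta>'
                   \<and> (\<forall>e\<in>lcarrier (skeleton A). \<eta>' e = idem_point A e)
                   \<longrightarrow> (\<forall>a\<in>carrier A. \<eta>' a = \<eta> a))"
proof -
  interpret PMV_algebra A n using assms by unfold_locales
  show ?thesis using eta_hom eta_inj eta_idempotent eta_unique by blast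
qed

end
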